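(* Every finite abelian group is completely $D$-realisable.
   Context: All groups are finite. $D(H)=H'$ denotes the derived subgroup of $H$. A finite group $G$ is completely $D$-realisable if there is a finite group $H$ such that: (i) $G\cong D(H)$; (ii) for every subgroup $G_1\leq G$ there exists $H_1\leq H$ with $G_1\cong D(H_1)$; (iii) for every $H_1\leq H$ there exists $G_1\leq G$ with $D(H_1)\cong G_1$. *)

theory Defs
  imports "HOL-Algebra.Algebra"
begin

definition D_of :: "('a, 'b) monoid_scheme \<Rightarrow> 'a set \<Rightarrow> ('a, 'b) monoid_scheme" where
  "D_of H K = H\<lparr>carrier := derived H K\<rparr>"

text \<open>Complete D-realisability. The witness group H is taken with carrier in nat:
  every finite group is isomorphic to one with carrier a subset of nat, so this loses nothing.\<close>
definition completely_D_realisable :: "('a, 'b) monoid_scheme \<Rightarrow> bool" where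
  "completely_D_realisable G \<longleftrightarrow>
    (\<exists>H :: nat monoid. group H \<and> finite (carrier H) \<and>
       G \<cong> D_of H (carrier H) \<and>
       (\<forall>G1. subgroup G1 G \<longrightarrow> (\<exists>H1. subgroup H1 H \<and> G\<lparr>carrier := G1\<rparr> \<cong> D_of H H1)) \<and>
       (\<forall>H1. subgroup H1 H \<longrightarrow> (\<exists>G1. subgroup G1 G \<and> D_of H H1 \<cong> G\<lparr>carrier := G1\<rparr>)))"

end

theory Submission
  imports Defs
begin

(* Take H = G wr C2 = (G \<times> G) \<rtimes> C2, the generator \<sigma> of C2 swapping the two coordinates.
   For abelian G, (a, b) \<sigma>^s \<mapsto> a b and (a, b) \<sigma>^s \<mapsto> s are homomorphisms to abelian
   groups whose kernels meet in the antidiagonal {(a, a^-1)}, a copy of G; hence the derived subgroup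
   of every subgroup of H is a subgroup of this copy of G. Conversely (a, a^-1) is the commutator
   of (a, 1) and \<sigma>, so for G1 \<le> G the derived subgroup of G1 wr C2 is exactly the copy of G1.
   Since H is finite it can be transported to a group carried by a subset of nat. *)

definition completely_D_realised_by :: "('a, 'b) monoid_scheme \<Rightarrow> 'c monoid \<Rightarrow> bool" where
  "completely_D_realised_by G H \<longleftrightarrow> group H \<and> finite (carrier H) \<and>
     G \<cong> D_of H (carrier H) \<and>
     (\<forall>G1. subgroup G1 G \<longrightarrow> (\<exists>H1. subgroup H1 H \<and> G\<lparr>carrier := G1\<rparr> \<cong> D_of H H1)) \<and>
     (\<forall>H1. subgroup H1 H \<longrightarrow> (\<exists>G1. subgroup G1 G \<and> D_of H H1 \<cong> G\<lparr>carrier := G1\<rparr>))"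

lemma completely_D_realisable_iff:
  "completely_D_realisable G \<longleftrightarrow> (\<exists>H :: nat monoid. completely_D_realised_by G H)"
  unfolding completely_D_realisable_def completely_D_realised_by_def ..

lemma D_of_iso:
  assumes "\<phi> \<in> iso A B" and "group A" and "group B" and "K \<subseteq> carrier A"
  shows "D_of A K \<cong> D_of B (\<phi> ` K)"
proof -
  have "group_hom A B \<phi>"
    using assms by (simp add: group_hom_def group_hom_axioms_def iso_def)
  then have "\<phi> ` derived A K = derived B (\<phi> ` K)"
    using group_hom.derived_img[OF _ assms(4)] by metis
  moreover have "restrict \<phi> (derived A K) \<in> iso (D_of A K) (B\<lparr>carrier := \<phi> ` derived A K\<rparr>)"
    unfolding D_of_def
    using iso_restrict[OF assms(1-3) group.derived_is_subgroup[OF assms(2,4)]] .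
  ultimately show ?thesis
    unfolding D_of_def by (metis is_isoI)
qed

lemma completely_D_realised_by_iso:
  assumes realised: "completely_D_realised_by G H0"
    and \<phi>: "\<phi> \<in> iso H0 H" and "group H"
  shows "completely_D_realised_by G H"
proof -
  have "group H0" and "finite (carrier H0)"
    using realised by (auto simp: completely_D_realised_by_def)
  note D_of_iso_subgroup = D_of_iso[OF _ _ _ subgroup.subset]
  have \<psi>: "inv_into (carrier H0) \<phi> \<in> iso H H0"
    using group.iso_set_sym[OF \<open>group H0\<close> \<phi>] .
  have carrier_H: "carrier H = \<phi> ` carrier H0"
    using \<phi> by (simp add: iso_def bij_betw_def)
  have "G \<cong> D_of H0 (carrier H0)"
    using realised by (simp add: completely_D_realised_by_def)
  also have "D_of H0 (carrier H0) \<cong> D_of H (carrier H)"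
    using D_of_iso[OF \<phi> \<open>group H0\<close> \<open>group H\<close> order_refl] carrier_H by simp
  finally have "G \<cong> D_of H (carrier H)" .
  moreover have "\<exists>H1. subgroup H1 H \<and> G\<lparr>carrier := G1\<rparr> \<cong> D_of H H1" if G1: "subgroup G1 G" for G1
  proof -
    obtain H1 where H1: "subgroup H1 H0" "G\<lparr>carrier := G1\<rparr> \<cong> D_of H0 H1"
      using realised G1 by (auto simp: completely_D_realised_by_def)
    then have "G\<lparr>carrier := G1\<rparr> \<cong> D_of H (\<phi> ` H1)"
      using D_of_iso_subgroup[OF \<phi> \<open>group H0\<close> \<open>group H\<close> H1(1)] iso_trans by blast
    then show ?thesis
      using subgroup.iso_subgroup[OF H1(1) \<open>group H0\<close> \<open>group H\<close> \<phi>] by blast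
  qed
  moreover have "\<exists>G1. subgroup G1 G \<and> D_of H H1 \<cong> G\<lparr>carrier := G1\<rparr>" if H1: "subgroup H1 H" for H1
  proof -
    obtain G1 where "subgroup G1 G" "D_of H0 (inv_into (carrier H0) \<phi> ` H1) \<cong> G\<lparr>carrier := G1\<rparr>"
      using realised subgroup.iso_subgroup[OF H1 \<open>group H\<close> \<open>group H0\<close> \<psi>]
      by (auto simp: completely_D_realised_by_def)
    then show ?thesis
      using D_of_iso_subgroup[OF \<psi> \<open>group H\<close> \<open>group H0\<close> H1] iso_trans by blast
  qed
  ultimately show ?thesis
    using \<open>group H\<close> \<open>finite (carrier H0)\<close> carrier_H
    by (simp add: completely_D_realised_by_def)
qed

lemma finite_group_iso_nat_monoid:
  assumes "group H0" and "finite (carrier H0)"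
  obtains H :: "nat monoid" and \<phi> where "group H" and "\<phi> \<in> iso H0 H"
proof -
  obtain \<phi> :: "'a \<Rightarrow> nat" where "inj_on \<phi> (carrier H0)"
    using finite_imp_inj_to_nat_seg[OF assms(2)] by blast
  define H :: "nat monoid" where "H = \<lparr>carrier = \<phi> ` carrier H0,
     monoid.mult = (\<lambda>x y. \<phi> (inv_into (carrier H0) \<phi> x \<otimes>\<^bsub>H0\<^esub> inv_into (carrier H0) \<phi> y)),
     monoid.one = \<phi> \<one>\<^bsub>H0\<^esub>\<rparr>"
  have "\<phi> \<in> iso H0 H"
    unfolding iso_def hom_def bij_betw_def H_def
    using \<open>inj_on \<phi> (carrier H0)\<close> by (auto simp: group.is_monoid[OF assms(1)])
  moreover have "group (H\<lparr>one := \<phi> \<one>\<^bsub>H0\<^esub>\<rparr>)"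
    using group.iso_imp_img_group[OF assms(1) \<open>\<phi> \<in> iso H0 H\<close>] .
  then have "group H" by (simp add: H_def)
  ultimately show ?thesis using that by blast
qed

lemma completely_D_realised_by_nat_monoid:
  assumes "completely_D_realised_by G H0"
  obtains H :: "nat monoid" where "completely_D_realised_by G H"
proof -
  have "group H0" and "finite (carrier H0)"
    using assms by (auto simp: completely_D_realised_by_def)
  then obtain H :: "nat monoid" and \<phi> where "group H" "\<phi> \<in> iso H0 H"
    by (rule finite_group_iso_nat_monoid)
  then show ?thesis
    using completely_D_realised_by_iso[OF assms] that by blast
qed

lemma (in group_hom) derived_subset_kernel:
  assumes "comm_group H" and "K \<subseteq> carrier G"
  shows "derived G K \<subseteq> kernel G H h"
proof -
  have "h ` derived G K = derived H (h ` K)"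
    using derived_img[OF assms(2)] by simp
  also have "\<dots> = {\<one>\<^bsub>H\<^esub>}"
    using assms(2) by (intro comm_group.derived_eq_singleton[OF assms(1)]) auto
  finally show ?thesis
    using G.derived_in_carrier[OF assms(2)] by (auto simp: kernel_def)
qed

lemma (in group_hom) subgroup_vimage:
  assumes "subgroup T H"
  shows "subgroup (h -` T \<inter> carrier G) G"
proof (rule G.subgroupI)
  have "\<one> \<in> h -` T \<inter> carrier G"
    using subgroup.one_closed[OF assms] by simp
  then show "h -` T \<inter> carrier G \<noteq> {}" by blast
qed (use assms in \<open>auto simp: subgroup.m_closed subgroup.m_inv_closed\<close>)

lemma (in group_hom) inj_on_imp_iso_subgroup_img:
  assumes "inj_on h (carrier G)" and "subgroup I G"
  shows "G\<lparr>carrier := I\<rparr> \<cong> H\<lparr>carrier := h ` I\<rparr>"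
proof -
  have "h \<in> hom (G\<lparr>carrier := I\<rparr>) (H\<lparr>carrier := h ` I\<rparr>)"
    using group_hom.homh[OF induced_group_hom[OF assms(2)]] .
  moreover have "bij_betw h I (h ` I)"
    using inj_on_subset[OF assms(1) subgroup.subset[OF assms(2)]] by (simp add: bij_betw_def)
  ultimately show ?thesis
    by (auto simp: is_iso_def iso_def)
qed

definition parity_group :: "bool monoid" where
  "parity_group = \<lparr>carrier = UNIV, monoid.mult = (\<noteq>), one = False\<rparr>"

lemma comm_group_parity_group: "comm_group parity_group"
  by (rule comm_groupI) (auto simp: parity_group_def)

text \<open>((a, b), s) stands for (a, b) \<sigma>^s, with C2 = {False, True} under exclusive or.\<close>
definition wreath_C2 :: "('a, 'b) monoid_scheme \<Rightarrow> (('a \<times> 'a) \<times> bool) monoid" where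
  "wreath_C2 G = \<lparr>carrier = (carrier G \<times> carrier G) \<times> UNIV,
     monoid.mult = (\<lambda>((a, b), s) ((c, d), t).
       (if s then (a \<otimes>\<^bsub>G\<^esub> d, b \<otimes>\<^bsub>G\<^esub> c) else (a \<otimes>\<^bsub>G\<^esub> c, b \<otimes>\<^bsub>G\<^esub> d), s \<noteq> t)),
     one = ((\<one>\<^bsub>G\<^esub>, \<one>\<^bsub>G\<^esub>), False)\<rparr>"

lemma wreath_C2_simps:
  "carrier (wreath_C2 G) = (carrier G \<times> carrier G) \<times> UNIV"
  "((a, b), s) \<otimes>\<^bsub>wreath_C2 G\<^esub> ((c, d), t) =
     (if s then (a \<otimes>\<^bsub>G\<^esub> d, b \<otimes>\<^bsub>G\<^esub> c) else (a \<otimes>\<^bsub>G\<^esub> c, b \<otimes>\<^bsub>G\<^esub> d), s \<noteq> t)"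
  "\<one>\<^bsub>wreath_C2 G\<^esub> = ((\<one>\<^bsub>G\<^esub>, \<one>\<^bsub>G\<^esub>), False)"
  by (simp_all add: wreath_C2_def)

definition antidiag :: "('a, 'b) monoid_scheme \<Rightarrow> 'a \<Rightarrow> ('a \<times> 'a) \<times> bool" where
  "antidiag G a = ((a, inv\<^bsub>G\<^esub> a), False)"

lemma inj_antidiag: "inj (antidiag G)"
  by (auto simp: inj_def antidiag_def)

context group
begin

lemma group_wreath_C2: "group (wreath_C2 G)"
proof (rule groupI)
  fix x assume "x \<in> carrier (wreath_C2 G)"
  then obtain a b s where x: "x = ((a, b), s)" "a \<in> carrier G" "b \<in> carrier G"
    by (auto simp: wreath_C2_simps)
  show "\<exists>y \<in> carrier (wreath_C2 G). y \<otimes>\<^bsub>wreath_C2 G\<^esub> x = \<one>\<^bsub>wreath_C2 G\<^esub>"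
    using x by (intro bexI[of _ "if s then ((inv b, inv a), True) else ((inv a, inv b), False)"])
      (auto simp: wreath_C2_simps)
qed (auto simp: wreath_C2_simps m_assoc)

lemma wreath_C2_inv:
  assumes "a \<in> carrier G" and "b \<in> carrier G"
  shows "inv\<^bsub>wreath_C2 G\<^esub> ((a, b), s) = (if s then ((inv b, inv a), True) else ((inv a, inv b), False))"
  using assms by (intro group.inv_equality[OF group_wreath_C2]) (auto simp: wreath_C2_simps)

lemma subgroup_wreath_C2:
  assumes "subgroup G1 G"
  shows "subgroup ((G1 \<times> G1) \<times> UNIV) (wreath_C2 G)"
proof (rule group.subgroupI[OF group_wreath_C2])
  note G1 = subgroup.mem_carrier[OF assms] subgroup.m_closed[OF assms] subgroup.m_inv_closed[OF assms]
  show "(G1 \<times> G1) \<times> UNIV \<subseteq> carrier (wreath_C2 G)"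
    using G1 by (auto simp: wreath_C2_simps)
  show "(G1 \<times> G1) \<times> UNIV \<noteq> {}"
    using subgroup.one_closed[OF assms] by blast
  show "inv\<^bsub>wreath_C2 G\<^esub> x \<in> (G1 \<times> G1) \<times> UNIV" if "x \<in> (G1 \<times> G1) \<times> UNIV" for x
    using that G1 by (auto simp: wreath_C2_inv)
  show "x \<otimes>\<^bsub>wreath_C2 G\<^esub> y \<in> (G1 \<times> G1) \<times> UNIV"
    if "x \<in> (G1 \<times> G1) \<times> UNIV" and "y \<in> (G1 \<times> G1) \<times> UNIV" for x y
    using that G1 by (auto simp: wreath_C2_simps)
qed

lemma group_hom_wreath_C2_parity: "group_hom (wreath_C2 G) parity_group snd"
  using group_wreath_C2 comm_group.axioms(2)[OF comm_group_parity_group]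
  by (auto simp: group_hom_def group_hom_axioms_def hom_def wreath_C2_simps parity_group_def)

lemma antidiag_commutator:
  assumes "a \<in> carrier G"
  shows "antidiag G a = ((a, \<one>), False) \<otimes>\<^bsub>wreath_C2 G\<^esub> ((\<one>, \<one>), True)
    \<otimes>\<^bsub>wreath_C2 G\<^esub> inv\<^bsub>wreath_C2 G\<^esub> ((a, \<one>), False) \<otimes>\<^bsub>wreath_C2 G\<^esub> inv\<^bsub>wreath_C2 G\<^esub> ((\<one>, \<one>), True)"
  using assms by (simp add: antidiag_def wreath_C2_inv wreath_C2_simps)

end

context comm_group
begin

lemma group_hom_antidiag: "group_hom G (wreath_C2 G) (antidiag G)"
  by (auto intro!: group_hom.intro group_wreath_C2 is_group
      simp: group_hom_axioms_def hom_def antidiag_def wreath_C2_simps inv_mult m_comm)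

lemma group_hom_wreath_C2_mult: "group_hom (wreath_C2 G) G (\<lambda>((a, b), s). a \<otimes> b)"
  by (auto intro!: group_hom.intro group_wreath_C2 is_group
      simp: group_hom_axioms_def hom_def wreath_C2_simps m_ac)

lemma derived_wreath_C2_subset_antidiag:
  assumes "S \<subseteq> carrier (wreath_C2 G)"
  shows "derived (wreath_C2 G) S \<subseteq> antidiag G ` carrier G"
proof -
  have "derived (wreath_C2 G) S \<subseteq> kernel (wreath_C2 G) G (\<lambda>((a, b), s). a \<otimes> b)
      \<inter> kernel (wreath_C2 G) parity_group snd"
    using group_hom.derived_subset_kernel[OF group_hom_wreath_C2_mult comm_group_axioms assms]
      group_hom.derived_subset_kernel[OF group_hom_wreath_C2_parity comm_group_parity_group assms]
    by blast
  also have "\<dots> \<subseteq> antidiag G ` carrier G"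
  proof
    fix x assume "x \<in> kernel (wreath_C2 G) G (\<lambda>((a, b), s). a \<otimes> b) \<inter> kernel (wreath_C2 G) parity_group snd"
    then obtain a b where "x = ((a, b), False)" "a \<in> carrier G" "b \<in> carrier G" "a \<otimes> b = \<one>"
      by (auto simp: kernel_def wreath_C2_simps parity_group_def)
    then show "x \<in> antidiag G ` carrier G"
      by (auto simp: antidiag_def inv_char m_comm)
  qed
  finally show ?thesis .
qed

lemma derived_wreath_C2_subgroup:
  assumes "subgroup G1 G"
  shows "derived (wreath_C2 G) ((G1 \<times> G1) \<times> UNIV) = antidiag G ` G1"
proof
  interpret W: group "wreath_C2 G" by (rule group_wreath_C2)
  let ?K = "(G1 \<times> G1) \<times> (UNIV :: bool set)"
  have K: "subgroup ?K (wreath_C2 G)"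
    using subgroup_wreath_C2[OF assms] .
  have "derived (wreath_C2 G) ?K \<subseteq> ?K \<inter> antidiag G ` carrier G"
    using W.derived_incl[OF order_refl K] derived_wreath_C2_subset_antidiag[OF subgroup.subset[OF K]]
    by blast
  also have "\<dots> = antidiag G ` G1"
    using subgroup.subset[OF assms] subgroup.m_inv_closed[OF assms] by (auto simp: antidiag_def)
  finally show "derived (wreath_C2 G) ?K \<subseteq> antidiag G ` G1" .
  show "antidiag G ` G1 \<subseteq> derived (wreath_C2 G) ?K"
  proof
    fix x assume "x \<in> antidiag G ` G1"
    then obtain a where "a \<in> G1" "x = antidiag G a" by blast
    then have "x \<in> derived_set (wreath_C2 G) ?K"
      using antidiag_commutator[of a] subgroup.mem_carrier[OF assms] subgroup.one_closed[OF assms]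
      by blast
    then show "x \<in> derived (wreath_C2 G) ?K"
      unfolding derived_def by (rule generate.incl)
  qed
qed

lemma completely_D_realised_by_wreath_C2:
  assumes "finite (carrier G)"
  shows "completely_D_realised_by G (wreath_C2 G)"
proof -
  interpret W: group "wreath_C2 G" by (rule group_wreath_C2)
  interpret antidiag: group_hom G "wreath_C2 G" "antidiag G" by (rule group_hom_antidiag)
  have iso_antidiag_img: "G\<lparr>carrier := G1\<rparr> \<cong> (wreath_C2 G)\<lparr>carrier := antidiag G ` G1\<rparr>"
    if "subgroup G1 G" for G1
    using antidiag.inj_on_imp_iso_subgroup_img[OF _ that] inj_antidiag[of G] by (simp add: inj_on_subset)
  have "G \<cong> D_of (wreath_C2 G) (carrier (wreath_C2 G))"
    using iso_antidiag_img[OF subgroup_self] derived_wreath_C2_subgroup[OF subgroup_self]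
    by (simp add: D_of_def wreath_C2_simps)
  moreover have "\<exists>H1. subgroup H1 (wreath_C2 G) \<and> G\<lparr>carrier := G1\<rparr> \<cong> D_of (wreath_C2 G) H1"
    if "subgroup G1 G" for G1
    using iso_antidiag_img[OF that] derived_wreath_C2_subgroup[OF that] subgroup_wreath_C2[OF that]
    by (metis D_of_def)
  moreover have "\<exists>G1. subgroup G1 G \<and> D_of (wreath_C2 G) H1 \<cong> G\<lparr>carrier := G1\<rparr>"
    if H1: "subgroup H1 (wreath_C2 G)" for H1
  proof -
    define G1 where "G1 = antidiag G -` derived (wreath_C2 G) H1 \<inter> carrier G"
    have G1: "subgroup G1 G"
      unfolding G1_def
      using antidiag.subgroup_vimage[OF W.derived_is_subgroup[OF subgroup.subset[OF H1]]] .
    have "antidiag G ` G1 = derived (wreath_C2 G) H1"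
      unfolding G1_def using derived_wreath_C2_subset_antidiag[OF subgroup.subset[OF H1]] by blast
    then have "G\<lparr>carrier := G1\<rparr> \<cong> D_of (wreath_C2 G) H1"
      using iso_antidiag_img[OF G1] by (simp add: D_of_def)
    then show ?thesis
      using G1 group.iso_sym[OF subgroup.subgroup_is_group[OF G1 is_group]] by blast
  qed
  ultimately show ?thesis
    using W.is_group assms by (simp add: completely_D_realised_by_def wreath_C2_simps)
qed

end

theorem theorem3p1:
  fixes G :: "('a, 'b) monoid_scheme"
  assumes "comm_group G" and "finite (carrier G)"
  shows "completely_D_realisable G"
proof -
  obtain H :: "nat monoid" where "completely_D_realised_by G H"
    using comm_group.completely_D_realised_by_wreath_C2[OF assms]
    by (rule completely_D_realised_by_nat_monoid)
  then show ?thesis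
    unfolding completely_D_realisable_iff by blast
qed

end
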